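(* Let $\mathbb{F}$ be any field, let $M\ge N\ge1$ be integers and $c_0,\dots,c_{N-1}\in\mathbb{F}^\times$. Define $p_t(z):=t(c_0+c_1z+\cdots+c_{N-1}z^{N-1})-z^M$. Then for all $\mathbf{u},\mathbf{v}\in\mathbb{F}^N$, $$\det p_t[\mathbf{u}\mathbf{v}^T]=t^{N-1}\Delta_N(\mathbf{u})\Delta_N(\mathbf{v})\prod_{j=0}^{N-1}c_j\Bigl(t-\sum_{j=0}^{N-1}\frac{s_{\mu(M,N,j)}(\mathbf{u})\,s_{\mu(M,N,j)}(\mathbf{v})}{c_j}\Bigr)$$ (an identity of polynomials in $t$). Moreover $s_{\mu(M,N,j)}(1,\dots,1)=\binom{M}{j}\binom{M-j-1}{N-j-1}$ for all $0\le j<N$.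
   Context: $\Delta_N(x_1,\dots,x_N):=\prod_{1\le i<j\le N}(x_i-x_j)$. For a partition $\mathbf{n}=(n_N\ge\cdots\ge n_1\ge0)$, $s_{\mathbf{n}}(x_1,\dots,x_N)$ is the Schur polynomial, i.e. the polynomial (with integer coefficients) equal to $\det(x_i^{n_j+N-j})/\det(x_i^{N-j})$ for pairwise distinct $x_i$. For $0\le j<N$, $\mu(M,N,j)$ is the hook partition $(M-N+1,1,\dots,1,0,\dots,0)$ with $N-j-1$ ones and $j$ zeros. $p_t[\mathbf{u}\mathbf{v}^T]$ is the $N\times N$ matrix with $(i,k)$ entry $p_t(u_iv_k)$. *)

theory Defs
  imports "Jordan_Normal_Form.Determinant" "HOL-Computational_Algebra.Polynomial"
begin

text \<open>Integer polynomials in the variables x_0,...,x_(N-1), represented by their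
 coefficient function on exponent vectors (finite support, exponents only on
 variables below N).\<close>

definition is_mpoly :: "nat \<Rightarrow> ((nat \<Rightarrow> nat) \<Rightarrow> int) \<Rightarrow> bool" where
  "is_mpoly N P \<longleftrightarrow> finite {m. P m \<noteq> 0} \<and> (\<forall>m. P m \<noteq> 0 \<longrightarrow> (\<forall>i\<ge>N. m i = 0))"

definition mpoly_eval :: "nat \<Rightarrow> ((nat \<Rightarrow> nat) \<Rightarrow> int) \<Rightarrow> (nat \<Rightarrow> 'a::comm_ring_1) \<Rightarrow> 'a" where
  "mpoly_eval N P x = (\<Sum>m\<in>{m. P m \<noteq> 0}. of_int (P m) * (\<Prod>i<N. x i ^ m i))"

definition vandermonde :: "nat \<Rightarrow> (nat \<Rightarrow> 'a::comm_ring_1) \<Rightarrow> 'a" where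
  "vandermonde N x = (\<Prod>j<N. \<Prod>i<j. x i - x j)"

text \<open>Partition lam given in weakly decreasing order lam 0 \<ge> lam 1 \<ge> ... \<ge> lam (N-1).
 Alternant det(x_i^(lam_k + N-1-k)).\<close>
definition alternant :: "nat \<Rightarrow> (nat \<Rightarrow> nat) \<Rightarrow> (nat \<Rightarrow> 'a::comm_ring_1) \<Rightarrow> 'a" where
  "alternant N lam x = det (mat N N (\<lambda>(i,k). x i ^ (lam k + (N - 1 - k))))"

definition schur_mpoly :: "nat \<Rightarrow> (nat \<Rightarrow> nat) \<Rightarrow> ((nat \<Rightarrow> nat) \<Rightarrow> int)" where
  "schur_mpoly N lam = (THE P. is_mpoly N P \<and>
     (\<forall>x :: nat \<Rightarrow> rat. inj_on x {..<N} \<longrightarrow>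
        mpoly_eval N P x * alternant N (\<lambda>_. 0) x = alternant N lam x))"

definition schur :: "nat \<Rightarrow> (nat \<Rightarrow> nat) \<Rightarrow> (nat \<Rightarrow> 'a::comm_ring_1) \<Rightarrow> 'a" where
  "schur N lam x = mpoly_eval N (schur_mpoly N lam) x"

definition hook :: "nat \<Rightarrow> nat \<Rightarrow> nat \<Rightarrow> (nat \<Rightarrow> nat)" where
  "hook M N j = (\<lambda>k. if k = 0 then M - N + 1 else if k < N - j then 1 else 0)"

definition pt :: "nat \<Rightarrow> nat \<Rightarrow> (nat \<Rightarrow> 'a::comm_ring_1) \<Rightarrow> 'a \<Rightarrow> 'a poly" where
  "pt M N c z = [: - (z ^ M), (\<Sum>j<N. c j * z ^ j) :]"

end

theory Submission
  imports Defs
begin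

(*
  Write z^M = \<Sum>k<N. q_k(x) z^k modulo e(z) = (z - x_0) \<cdots> (z - x_(N-1)); the q_k are
  integer polynomials in x, computed by the recursion z^(m+1) mod e = z (z^m mod e) - a_m e,
  where a_m is the z^(N-1) coefficient of z^m mod e. Since x_i^M = \<Sum>k<N. q_k(x) x_i^k, the
  alternant of the hook \<mu>(M,N,j), i.e. the Vandermonde matrix with the column of x^j replaced
  by x^M, equals (-1)^(N-1-j) q_j(x) \<Delta>_N(x); hence s_\<mu>(M,N,j) = \<plusminus>q_j.
  The same identity factors p_t[u v^T] as U (t C - q(u) q(v)^T) V^T with Vandermonde matrices U, V
  and C = diag(c), and the matrix determinant lemma for a diagonal minus a rank-one matrix gives the
  first claim. At x = (1, ..., 1) the modulus is (z - 1)^N, so z^M mod e is the truncated binomial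
  expansion \<Sum>i<N. (M choose i) (z - 1)^i, whose z^j coefficient is an alternating binomial sum.
*)

section \<open>Integer polynomials in finitely many variables\<close>

type_synonym int_mpoly = "(nat \<Rightarrow> nat) \<Rightarrow> int"

definition monomial_value :: "nat \<Rightarrow> (nat \<Rightarrow> nat) \<Rightarrow> (nat \<Rightarrow> 'a::comm_ring_1) \<Rightarrow> 'a" where
  "monomial_value N m x = (\<Prod>i<N. x i ^ m i)"

definition mpoly_const :: "int \<Rightarrow> int_mpoly" where
  "mpoly_const c = (\<lambda>m. if m = (\<lambda>_. 0) then c else 0)"

definition mpoly_var :: "nat \<Rightarrow> int_mpoly" where
  "mpoly_var i = (\<lambda>m. if m = (\<lambda>j. if j = i then 1 else 0) then 1 else 0)"

definition mpoly_diff :: "int_mpoly \<Rightarrow> int_mpoly \<Rightarrow> int_mpoly" where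
  "mpoly_diff P Q = (\<lambda>m. P m - Q m)"

definition mpoly_mult :: "int_mpoly \<Rightarrow> int_mpoly \<Rightarrow> int_mpoly" where
  "mpoly_mult P Q = (\<lambda>m. \<Sum>(a, b)\<in>{(a, b). P a \<noteq> 0 \<and> Q b \<noteq> 0 \<and> (\<lambda>i. a i + b i) = m}. P a * Q b)"

lemma monomial_value_add: "monomial_value N (\<lambda>i. a i + b i) x = monomial_value N a x * monomial_value N b x"
  unfolding monomial_value_def by (simp add: power_add prod.distrib)

lemma mpoly_eval_superset:
  assumes "finite S" "{m. P m \<noteq> 0} \<subseteq> S"
  shows "mpoly_eval N P x = (\<Sum>m\<in>S. of_int (P m) * monomial_value N m x)"
  unfolding mpoly_eval_def monomial_value_def
  by (rule sum.mono_neutral_left) (use assms in auto)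

lemma is_mpoly_const: "is_mpoly N (mpoly_const c)"
  unfolding is_mpoly_def mpoly_const_def
  by (auto intro: finite_subset[of _ "{\<lambda>_. 0}"])

lemma mpoly_eval_const: "mpoly_eval N (mpoly_const c) x = of_int c"
proof -
  have "mpoly_eval N (mpoly_const c) x = (\<Sum>m\<in>{\<lambda>_. 0}. of_int (mpoly_const c m) * monomial_value N m x)"
    by (rule mpoly_eval_superset) (auto simp: mpoly_const_def split: if_splits)
  thus ?thesis by (simp add: mpoly_const_def monomial_value_def)
qed

lemma is_mpoly_var: "i < N \<Longrightarrow> is_mpoly N (mpoly_var i)"
  unfolding is_mpoly_def mpoly_var_def
  by (auto intro: finite_subset[of _ "{\<lambda>j. if j = i then 1 else 0}"])

lemma mpoly_eval_var:
  assumes "i < N"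
  shows "mpoly_eval N (mpoly_var i) x = x i"
proof -
  have "mpoly_eval N (mpoly_var i) x =
      (\<Sum>m\<in>{\<lambda>j. if j = i then 1 else 0}. of_int (mpoly_var i m) * monomial_value N m x)"
    by (rule mpoly_eval_superset) (auto simp: mpoly_var_def split: if_splits)
  also have "\<dots> = (\<Prod>j<N. if j = i then x j else 1)"
    by (simp add: mpoly_var_def monomial_value_def if_distrib[of "power _"] cong: if_cong)
  also have "\<dots> = x i" using assms by (simp add: prod.delta)
  finally show ?thesis .
qed

lemma is_mpoly_diff: "is_mpoly N P \<Longrightarrow> is_mpoly N Q \<Longrightarrow> is_mpoly N (mpoly_diff P Q)"
  unfolding is_mpoly_def mpoly_diff_def
  by (auto intro: finite_subset[of _ "{m. P m \<noteq> 0} \<union> {m. Q m \<noteq> 0}"]) (metis diff_self)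

lemma mpoly_eval_diff:
  assumes "is_mpoly N P" "is_mpoly N Q"
  shows "mpoly_eval N (mpoly_diff P Q) x = mpoly_eval N P x - mpoly_eval N Q x"
proof -
  let ?S = "{m. P m \<noteq> 0} \<union> {m. Q m \<noteq> 0}"
  have S: "finite ?S" using assms unfolding is_mpoly_def by auto
  have "mpoly_eval N (mpoly_diff P Q) x = (\<Sum>m\<in>?S. of_int (P m - Q m) * monomial_value N m x)"
    by (subst mpoly_eval_superset[OF S]) (auto simp: mpoly_diff_def)
  thus ?thesis
    by (simp add: mpoly_eval_superset[OF S] left_diff_distrib sum_subtractf)
qed

lemma mpoly_mult_support:
  "{m. mpoly_mult P Q m \<noteq> 0} \<subseteq> (\<lambda>(a, b) i. a i + b i) ` ({a. P a \<noteq> 0} \<times> {b. Q b \<noteq> 0})"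
proof
  fix m assume m: "m \<in> {m. mpoly_mult P Q m \<noteq> 0}"
  have "{(a, b). P a \<noteq> 0 \<and> Q b \<noteq> 0 \<and> (\<lambda>i. a i + b i) = m} \<noteq> {}" (is "?F \<noteq> {}")
  proof
    assume F: "?F = {}"
    have "mpoly_mult P Q m = 0" unfolding mpoly_mult_def F by simp
    with m show False by simp
  qed
  then show "m \<in> (\<lambda>(a, b) i. a i + b i) ` ({a. P a \<noteq> 0} \<times> {b. Q b \<noteq> 0})"
    by force
qed

lemma is_mpoly_mult:
  assumes "is_mpoly N P" "is_mpoly N Q"
  shows "is_mpoly N (mpoly_mult P Q)"
  unfolding is_mpoly_def
proof (intro conjI allI impI)
  have "finite ((\<lambda>(a, b) i. a i + b i) ` ({a. P a \<noteq> 0} \<times> {b. Q b \<noteq> 0}))"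
    using assms unfolding is_mpoly_def by auto
  then show "finite {m. mpoly_mult P Q m \<noteq> 0}"
    using mpoly_mult_support by (rule finite_subset[rotated])
  fix m i assume "mpoly_mult P Q m \<noteq> 0" "N \<le> i"
  then have "m \<in> (\<lambda>(a, b) i. a i + b i) ` ({a. P a \<noteq> 0} \<times> {b. Q b \<noteq> 0})"
    using mpoly_mult_support by blast
  then obtain a b where "P a \<noteq> 0" "Q b \<noteq> 0" "m = (\<lambda>i. a i + b i)" by auto
  then show "m i = 0" using assms \<open>N \<le> i\<close> unfolding is_mpoly_def by simp
qed

lemma mpoly_eval_mult:
  assumes "is_mpoly N P" "is_mpoly N Q"
  shows "mpoly_eval N (mpoly_mult P Q) x = mpoly_eval N P x * mpoly_eval N Q x"
proof -
  let ?A = "{a. P a \<noteq> 0}" and ?B = "{b. Q b \<noteq> 0}"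
  let ?g = "\<lambda>(a, b) i. a i + b i :: nat"
  have AB: "finite (?A \<times> ?B)" using assms unfolding is_mpoly_def by auto
  hence S: "finite (?g ` (?A \<times> ?B))" by blast
  have fibre: "of_int (mpoly_mult P Q m) * monomial_value N m x =
      (\<Sum>(a, b)\<in>{ab \<in> ?A \<times> ?B. ?g ab = m}. of_int (P a * Q b) * monomial_value N (?g (a, b)) x)"
    for m
  proof -
    have "{(a, b). P a \<noteq> 0 \<and> Q b \<noteq> 0 \<and> (\<lambda>i. a i + b i) = m} = {ab \<in> ?A \<times> ?B. ?g ab = m}"
      by auto
    then show ?thesis
      unfolding mpoly_mult_def of_int_sum sum_distrib_right by (intro sum.cong) auto
  qed
  have "mpoly_eval N (mpoly_mult P Q) x =
      (\<Sum>m\<in>?g ` (?A \<times> ?B). of_int (mpoly_mult P Q m) * monomial_value N m x)"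
    by (rule mpoly_eval_superset[OF S mpoly_mult_support])
  also have "\<dots> = (\<Sum>(a, b)\<in>?A \<times> ?B. of_int (P a * Q b) * monomial_value N (?g (a, b)) x)"
    unfolding fibre by (rule sum.group[OF AB S]) auto
  also have "\<dots> = (\<Sum>a\<in>?A. \<Sum>b\<in>?B. (of_int (P a) * monomial_value N a x) * (of_int (Q b) * monomial_value N b x))"
    unfolding sum.cartesian_product by (intro sum.cong) (auto simp: monomial_value_add algebra_simps)
  also have "\<dots> = mpoly_eval N P x * mpoly_eval N Q x"
    unfolding mpoly_eval_def monomial_value_def sum_product by simp
  finally show ?thesis .
qed

lemma base_expansion_inj:
  fixes B :: nat
  assumes "\<forall>i<n. a i < B" "\<forall>i<n. b i < B" "(\<Sum>i<n. a i * B ^ i) = (\<Sum>i<n. b i * B ^ i)"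
  shows "\<forall>i<n. a i = b i"
  using assms
proof (induction n arbitrary: a b)
  case 0
  show ?case by simp
next
  case (Suc n)
  have split: "(\<Sum>i<Suc n. f i * B ^ i) = f 0 + B * (\<Sum>i<n. f (Suc i) * B ^ i)" for f :: "nat \<Rightarrow> nat"
    by (subst sum.lessThan_Suc_shift) (simp add: sum_distrib_left mult_ac del: sum.lessThan_Suc)
  let ?X = "\<Sum>i<n. a (Suc i) * B ^ i" and ?Y = "\<Sum>i<n. b (Suc i) * B ^ i"
  have a0: "a 0 < B" and b0: "b 0 < B" using Suc.prems by auto
  have eq: "a 0 + B * ?X = b 0 + B * ?Y"
    using Suc.prems(3) unfolding split .
  have "a 0 = (a 0 + B * ?X) mod B" using a0 by simp
  also have "\<dots> = b 0" unfolding eq using b0 by simp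
  finally have "a 0 = b 0" .
  moreover have "?X = ?Y"
  proof -
    have "?X = (a 0 + B * ?X) div B" using a0 by simp
    also have "\<dots> = ?Y" unfolding eq using b0 by simp
    finally show ?thesis .
  qed
  moreover have "\<forall>i<n. a (Suc i) = b (Suc i)"
    by (rule Suc.IH) (use Suc.prems \<open>?X = ?Y\<close> in auto)
  ultimately show ?case by (auto simp: less_Suc_eq_0_disj)
qed

lemma mpoly_eval_kronecker:
  "mpoly_eval N P (\<lambda>i. t ^ (B ^ i)) =
     poly (\<Sum>m\<in>{m. P m \<noteq> 0}. monom (of_int (P m)) (\<Sum>i<N. m i * B ^ i)) t"
proof -
  have "(\<Prod>i<N. (t ^ B ^ i) ^ m i) = t ^ (\<Sum>i<N. m i * B ^ i)" for m
    unfolding power_sum by (intro prod.cong) (simp_all add: power_mult[symmetric] mult.commute)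
  then show ?thesis
    unfolding mpoly_eval_def by (simp add: poly_sum poly_monom)
qed

(* Kronecker substitution: with B above every exponent, x_i = t^(B^i) sends distinct monomials
   to distinct powers of t. *)
lemma mpoly_eq_0_if_eval_rat_eq_0:
  assumes P: "is_mpoly N P"
    and eval_0: "\<And>x :: nat \<Rightarrow> rat. inj_on x {..<N} \<Longrightarrow> mpoly_eval N P x = 0"
  shows "P m = 0"
proof (rule ccontr)
  assume Pm: "P m \<noteq> 0"
  let ?S = "{m. P m \<noteq> 0}"
  have S: "finite ?S" and vars: "\<And>m i. P m \<noteq> 0 \<Longrightarrow> N \<le> i \<Longrightarrow> m i = 0"
    using P unfolding is_mpoly_def by auto
  define B where "B = Max (insert 0 ((\<lambda>(m, i). m i) ` (?S \<times> {..<N}))) + 2"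
  have B: "2 \<le> B" unfolding B_def by simp
  have exponent_less: "m i < B" if "m \<in> ?S" "i < N" for m i
  proof -
    have "m i \<le> Max (insert 0 ((\<lambda>(m, i). m i) ` (?S \<times> {..<N})))"
      using S that by (intro Max_ge) force+
    then show ?thesis unfolding B_def by simp
  qed
  define enc where "enc m = (\<Sum>i<N. m i * B ^ i)" for m :: "nat \<Rightarrow> nat"
  have enc_inj: "inj_on enc ?S"
  proof
    fix m m' assume m: "m \<in> ?S" and m': "m' \<in> ?S" and "enc m = enc m'"
    then have "\<forall>i<N. m i = m' i"
      unfolding enc_def by (intro base_expansion_inj[of N _ B]) (auto intro: exponent_less)
    show "m = m'"
    proof
      fix i
      show "m i = m' i"
        using \<open>\<forall>i<N. m i = m' i\<close> vars[of m i] vars[of m' i] m m' by (cases "i < N") auto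
    qed
  qed
  define p :: "rat poly" where "p = (\<Sum>m\<in>?S. monom (of_int (P m)) (enc m))"
  have "coeff p (enc m) = (\<Sum>m'\<in>?S. if m' = m then of_int (P m') else 0)"
    unfolding p_def coeff_sum coeff_monom
    using Pm by (intro sum.cong refl) (simp add: inj_on_eq_iff[OF enc_inj])
  also have "\<dots> = of_int (P m)" using S Pm by (simp add: sum.delta')
  finally have "p \<noteq> 0" using Pm by auto
  then have "finite {t. poly p t = 0}" by (rule poly_roots_finite)
  moreover have root: "poly p t = 0" if "1 < t" for t
  proof -
    have "inj_on (\<lambda>i. t ^ (B ^ i)) {..<N}"
    proof
      fix i j assume "t ^ (B ^ i) = t ^ (B ^ j)"
      then have "B ^ i = B ^ j" using power_inject_exp[OF \<open>1 < t\<close>] by simp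
      then show "i = j" using B by simp
    qed
    then have "mpoly_eval N P (\<lambda>i. t ^ (B ^ i)) = 0" by (rule eval_0)
    then show "poly p t = 0"
      unfolding mpoly_eval_kronecker p_def enc_def by simp
  qed
  moreover have "{1<..} \<subseteq> {t. poly p t = 0}" using root by auto
  ultimately have "finite {1 :: rat<..}" by (meson finite_subset)
  then show False using infinite_Ioi by blast
qed

section \<open>Determinants\<close>

lemma index_mat_mult_mat:
  assumes "i < n" "k < n"
  shows "(mat n n f * mat n n g) $$ (i, k) = (\<Sum>l<n. f (i, l) * g (l, k))"
  using assms by (simp add: scalar_prod_def lessThan_atLeast0)

lemma det_lower_triangular_mat:
  assumes "\<And>i k. i < k \<Longrightarrow> k < n \<Longrightarrow> f (i, k) = 0"
  shows "det (mat n n f) = (\<Prod>i<n. f (i, i))"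
  using assms
  by (subst det_lower_triangular[of n]) (auto simp: diag_mat_def prod.list_conv_set_nth lessThan_atLeast0)

lemma det_upper_triangular_mat:
  assumes "\<And>i k. k < i \<Longrightarrow> i < n \<Longrightarrow> f (i, k) = 0"
  shows "det (mat n n f) = (\<Prod>i<n. f (i, i))"
  using assms
  by (subst det_upper_triangular[of _ n])
    (auto simp: upper_triangular_def diag_mat_def prod.list_conv_set_nth lessThan_atLeast0)

definition diag_minus_rank_one :: "nat \<Rightarrow> (nat \<Rightarrow> 'a::comm_ring_1) \<Rightarrow> (nat \<Rightarrow> 'a) \<Rightarrow> (nat \<Rightarrow> 'a) \<Rightarrow> 'a mat" where
  "diag_minus_rank_one n d p w = mat n n (\<lambda>(i, k). (if i = k then d i else 0) - p i * w k)"

lemma det_diag_minus_rank_one_last_row_replaced: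
  "det (mat (Suc n) (Suc n) (\<lambda>(i, k). if i = n then w k else (if i = k then d i else 0) - p i * w k))
     = w n * (\<Prod>i<n. d i)"
proof -
  define E where "E = mat (Suc n) (Suc n) (\<lambda>(i, k). if i = k then 1 else if k = n then - p i else 0)"
  define Y where "Y = mat (Suc n) (Suc n) (\<lambda>(i, k). if i = n then w k else if i = k then d i else 0)"
  have "mat (Suc n) (Suc n) (\<lambda>(i, k). if i = n then w k else (if i = k then d i else 0) - p i * w k) = E * Y"
  proof (rule eq_matI)
    fix i k assume "i < dim_row (E * Y)" "k < dim_col (E * Y)"
    then have i: "i < Suc n" and k: "k < Suc n" by (auto simp: E_def Y_def)
    have "(E * Y) $$ (i, k) =
        (\<Sum>l<Suc n. (if l = i then 1 else if l = n then - p i else 0) * Y $$ (l, k))"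
      unfolding E_def Y_def index_mat_mult_mat[OF i k] by (intro sum.cong) (use k in auto)
    also have "\<dots> = Y $$ (i, k) + (if i = n then 0 else - p i * Y $$ (n, k))"
      using i by (auto simp: if_distrib[of "\<lambda>x. x * _"] sum.distrib sum.delta' sum.If_cases)
    finally show "mat (Suc n) (Suc n) (\<lambda>(i, k). if i = n then w k else (if i = k then d i else 0) - p i * w k) $$ (i, k)
        = (E * Y) $$ (i, k)"
      using i k by (auto simp: Y_def)
  qed (auto simp: E_def Y_def)
  moreover have "det (E * Y) = det E * det Y"
    by (rule det_mult) (auto simp: E_def Y_def)
  moreover have "det E = 1"
    unfolding E_def by (subst det_upper_triangular_mat) auto
  moreover have "det Y = w n * (\<Prod>i<n. d i)"
    unfolding Y_def by (subst det_lower_triangular_mat) auto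
  ultimately show ?thesis by simp
qed

lemma det_diag_minus_rank_one:
  "det (diag_minus_rank_one n d p w) = (\<Prod>i<n. d i) - (\<Sum>j<n. p j * w j * (\<Prod>l\<in>{..<n} - {j}. d l))"
proof (induction n)
  case 0
  show ?case by (simp add: diag_minus_rank_one_def)
next
  case (Suc n)
  let ?A = "diag_minus_rank_one (Suc n) d p w"
  let ?X = "mat (Suc n) (Suc n) (\<lambda>(i, k). if i = n then w k else (if i = k then d i else 0) - p i * w k)"
  have A: "?A \<in> carrier_mat (Suc n) (Suc n)" and X: "?X \<in> carrier_mat (Suc n) (Suc n)"
    by (simp_all add: diag_minus_rank_one_def)
  have cofactor_X: "cofactor ?X n k = cofactor ?A n k" for k
    unfolding cofactor_def
    by (rule arg_cong[where f = "\<lambda>B. _ * det B"], rule eq_matI)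
      (auto simp: mat_delete_def diag_minus_rank_one_def)
  have "det ?A = (\<Sum>k<Suc n. ((if n = k then d n else 0) - p n * w k) * cofactor ?A n k)"
    by (subst laplace_expansion_row[OF A, of n]) (auto simp: diag_minus_rank_one_def)
  also have "\<dots> = d n * cofactor ?A n n - p n * (\<Sum>k<Suc n. w k * cofactor ?A n k)"
    by (simp add: left_diff_distrib sum_subtractf sum_distrib_left mult.assoc
        if_distrib[of "\<lambda>x. x * _"] distrib_left)
  also have "(\<Sum>k<Suc n. w k * cofactor ?A n k) = det ?X"
    by (subst laplace_expansion_row[OF X, of n]) (auto simp: cofactor_X)
  also have "cofactor ?A n n = det (diag_minus_rank_one n d p w)"
    unfolding cofactor_def
    by (simp, rule arg_cong[where f = det], rule eq_matI)
      (auto simp: mat_delete_def diag_minus_rank_one_def)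
  finally have "det ?A = d n * det (diag_minus_rank_one n d p w) - p n * (w n * (\<Prod>i<n. d i))"
    by (simp add: det_diag_minus_rank_one_last_row_replaced)
  moreover have "(\<Prod>l\<in>{..<Suc n} - {j}. d l) = d n * (\<Prod>l\<in>{..<n} - {j}. d l)" if "j < n" for j
  proof -
    have "{..<Suc n} - {j} = insert n ({..<n} - {j})" using that by auto
    then show ?thesis by simp
  qed
  moreover have "{..<Suc n} - {n} = {..<n}" by auto
  ultimately show ?case
    unfolding Suc.IH by (simp add: algebra_simps sum_distrib_left)
qed

definition vandermonde_mat :: "nat \<Rightarrow> (nat \<Rightarrow> 'a::comm_ring_1) \<Rightarrow> 'a mat" where
  "vandermonde_mat n x = mat n n (\<lambda>(i, k). x i ^ (n - 1 - k))"

lemma det_vandermonde_mat_Suc: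
  "det (vandermonde_mat (Suc n) x) = det (vandermonde_mat n x) * (\<Prod>i<n. x i - x n)"
proof -
  define B where "B = mat (Suc n) (Suc n) (\<lambda>(i, k). if k < n then x i ^ (n - 1 - k) * (x i - x n) else 1)"
  define T where "T = mat (Suc n) (Suc n) (\<lambda>(l, k). if k \<le> l then x n ^ (l - k) else 0)"
  \<comment> \<open>B arises from the column operations col_k := col_k - x_n col_(k+1), which T undoes\<close>
  have "vandermonde_mat (Suc n) x = B * T"
  proof (rule eq_matI)
    fix i k assume "i < dim_row (B * T)" "k < dim_col (B * T)"
    then have i: "i < Suc n" and k: "k < Suc n" by (auto simp: B_def T_def)
    have "(B * T) $$ (i, k) =
        (\<Sum>l<n. if k \<le> l then x i ^ (n - 1 - l) * (x i - x n) * x n ^ (l - k) else 0) + x n ^ (n - k)"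
      unfolding B_def T_def index_mat_mult_mat[OF i k] using k
      by (simp add: sum.lessThan_Suc) (intro sum.cong; auto)
    also have "(\<Sum>l<n. if k \<le> l then x i ^ (n - 1 - l) * (x i - x n) * x n ^ (l - k) else 0)
        = (\<Sum>l\<in>{k..<n}. x i ^ (n - 1 - l) * (x i - x n) * x n ^ (l - k))"
      by (simp add: sum.If_cases lessThan_atLeast0) (intro sum.cong; auto)
    also have "\<dots> = (\<Sum>t\<in>{0..<n - k}. x i ^ (n - 1 - (t + k)) * (x i - x n) * x n ^ (t + k - k))"
      using sum.shift_bounds_nat_ivl[of "\<lambda>l. x i ^ (n - 1 - l) * (x i - x n) * x n ^ (l - k)" 0 k "n - k"] k
      by simp
    also have "\<dots> = (x i - x n) * (\<Sum>t<n - k. x i ^ (n - k - Suc t) * x n ^ t)"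
      by (simp add: lessThan_atLeast0 sum_distrib_left mult_ac add.commute)
    also have "\<dots> = x i ^ (n - k) - x n ^ (n - k)"
      unfolding minus_diff_eq[of "x n" "x i", symmetric] mult_minus_left power_diff_sumr2[symmetric]
      by simp
    finally show "vandermonde_mat (Suc n) x $$ (i, k) = (B * T) $$ (i, k)"
      using i k by (simp add: vandermonde_mat_def)
  qed (auto simp: vandermonde_mat_def B_def T_def)
  moreover have "det T = 1"
    unfolding T_def by (subst det_lower_triangular_mat) auto
  moreover have "det B = det (vandermonde_mat n x) * (\<Prod>i<n. x i - x n)"
  proof -
    have "det B = cofactor B n n"
      by (subst laplace_expansion_row[of B "Suc n" n]) (auto simp: B_def sum.lessThan_Suc)
    also have "\<dots> = det (mat\<^sub>r n n (\<lambda>i. (x i - x n) \<cdot>\<^sub>v vec n (\<lambda>k. x i ^ (n - 1 - k))))"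
      unfolding cofactor_def
      by (simp, rule arg_cong[where f = det], rule eq_matI) (auto simp: mat_delete_def B_def)
    also have "\<dots> = (\<Prod>i\<in>{0..<n}. x i - x n) * det (mat\<^sub>r n n (\<lambda>i. vec n (\<lambda>k. x i ^ (n - 1 - k))))"
      by (rule det_rows_mul) auto
    also have "mat\<^sub>r n n (\<lambda>i. vec n (\<lambda>k. x i ^ (n - 1 - k))) = vandermonde_mat n x"
      by (rule eq_matI) (auto simp: vandermonde_mat_def)
    finally show ?thesis by (simp add: lessThan_atLeast0 mult.commute)
  qed
  moreover have "det (B * T) = det B * det T"
    by (rule det_mult) (auto simp: B_def T_def)
  ultimately show ?thesis by simp
qed

lemma det_vandermonde_mat: "det (vandermonde_mat n x) = vandermonde n x"
proof (induction n)
  case 0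
  show ?case by (simp add: vandermonde_def vandermonde_mat_def)
next
  case (Suc n)
  then show ?case by (simp add: det_vandermonde_mat_Suc vandermonde_def)
qed

lemma alternant_zero_eq_vandermonde: "alternant N (\<lambda>_. 0) x = vandermonde N x"
  by (simp add: alternant_def det_vandermonde_mat[symmetric] vandermonde_mat_def)

lemma vandermonde_nonzero:
  fixes x :: "nat \<Rightarrow> 'a::idom"
  assumes "inj_on x {..<N}"
  shows "vandermonde N x \<noteq> 0"
  using assms unfolding vandermonde_def by (auto simp: prod_zero_iff inj_on_def)

lemma mat_mult_diag_minus_rank_one_mult:
  "mat n n a * diag_minus_rank_one n d p w * mat n n b =
     mat n n (\<lambda>(i, l). (\<Sum>k<n. a (i, k) * d k * b (k, l))
       - (\<Sum>k<n. a (i, k) * p k) * (\<Sum>k<n. w k * b (k, l)))"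
proof -
  have "mat n n a * diag_minus_rank_one n d p w =
      mat n n (\<lambda>(i, k). a (i, k) * d k - (\<Sum>j<n. a (i, j) * p j) * w k)"
  proof (rule eq_matI)
    fix i k assume "i < dim_row (mat n n (\<lambda>(i, k). a (i, k) * d k - (\<Sum>j<n. a (i, j) * p j) * w k))"
      and "k < dim_col (mat n n (\<lambda>(i, k). a (i, k) * d k - (\<Sum>j<n. a (i, j) * p j) * w k))"
    then have i: "i < n" and k: "k < n" by simp_all
    show "(mat n n a * diag_minus_rank_one n d p w) $$ (i, k) =
        mat n n (\<lambda>(i, k). a (i, k) * d k - (\<Sum>j<n. a (i, j) * p j) * w k) $$ (i, k)"
      unfolding diag_minus_rank_one_def index_mat_mult_mat[OF i k] using i k
      by (simp add: right_diff_distrib sum_subtractf sum_distrib_left mult_ac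
          if_distrib[of "\<lambda>y. _ * y"] sum.delta' cong: if_cong)
  qed (simp_all add: diag_minus_rank_one_def)
  moreover have "(mat n n (\<lambda>(i, k). a (i, k) * d k - (\<Sum>j<n. a (i, j) * p j) * w k) * mat n n b) $$ (i, l) =
      (\<Sum>k<n. a (i, k) * d k * b (k, l)) - (\<Sum>k<n. a (i, k) * p k) * (\<Sum>k<n. w k * b (k, l))"
    if "i < n" "l < n" for i l
    unfolding index_mat_mult_mat[OF that]
    by (simp add: right_diff_distrib sum_subtractf sum_distrib_left sum_distrib_right mult_ac)
  ultimately show ?thesis by (auto intro!: eq_matI)
qed

section \<open>Remainders of powers modulo a product of linear factors\<close>

fun lin_prod_coeff_mpoly :: "nat \<Rightarrow> nat \<Rightarrow> int_mpoly" where
  "lin_prod_coeff_mpoly 0 k = mpoly_const (if k = 0 then 1 else 0)"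
| "lin_prod_coeff_mpoly (Suc n) k =
     mpoly_diff (if k = 0 then mpoly_const 0 else lin_prod_coeff_mpoly n (k - 1))
       (mpoly_mult (mpoly_var n) (lin_prod_coeff_mpoly n k))"

lemma is_mpoly_lin_prod_coeff_mpoly: "n \<le> N \<Longrightarrow> is_mpoly N (lin_prod_coeff_mpoly n k)"
  by (induction n arbitrary: k)
    (auto intro!: is_mpoly_diff is_mpoly_mult is_mpoly_var is_mpoly_const)

lemma coeff_mult_linear:
  fixes p :: "'a::comm_ring_1 poly"
  shows "coeff (p * [:- a, 1:]) k = (if k = 0 then 0 else coeff p (k - 1)) - a * coeff p k"
proof -
  have "p * [:- a, 1:] = smult (- a) p + pCons 0 p"
    by (subst mult.commute) (simp add: mult_pCons_left)
  then show ?thesis by (cases k) auto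
qed

lemma coeff_prod_linear:
  assumes "n \<le> N"
  shows "coeff (\<Prod>l<n. [:- x l, 1:]) k = mpoly_eval N (lin_prod_coeff_mpoly n k) x"
  using assms
proof (induction n arbitrary: k)
  case 0
  show ?case by (simp add: mpoly_eval_const)
next
  case (Suc n)
  then show ?case
    by (cases k) (simp_all add: coeff_mult_linear mpoly_eval_diff mpoly_eval_mult mpoly_eval_const
        mpoly_eval_var is_mpoly_lin_prod_coeff_mpoly is_mpoly_const is_mpoly_var is_mpoly_mult)
qed

lemma coeff_prod_linear_top:
  "coeff (\<Prod>l<n. [:- x l, 1:]) n = 1 \<and> (\<forall>k>n. coeff (\<Prod>l<n. [:- x l, 1:]) k = 0)"
  by (induction n) (auto simp: coeff_mult_linear coeff_pCons split: nat.split)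

(* the coefficient of z^k in z^m mod \<Prod>l<N. (z - x_l) *)
fun pow_mod_coeff_mpoly :: "nat \<Rightarrow> nat \<Rightarrow> nat \<Rightarrow> int_mpoly" where
  "pow_mod_coeff_mpoly N 0 k = mpoly_const (if k = 0 then 1 else 0)"
| "pow_mod_coeff_mpoly N (Suc m) k =
     mpoly_diff (if k = 0 then mpoly_const 0 else pow_mod_coeff_mpoly N m (k - 1))
       (mpoly_mult (pow_mod_coeff_mpoly N m (N - 1)) (lin_prod_coeff_mpoly N k))"

lemma is_mpoly_pow_mod_coeff_mpoly: "is_mpoly N (pow_mod_coeff_mpoly N m k)"
  by (induction m arbitrary: k)
    (auto intro!: is_mpoly_diff is_mpoly_mult is_mpoly_lin_prod_coeff_mpoly is_mpoly_const)

lemma mpoly_eval_pow_mod_coeff_mpoly_Suc: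
  "mpoly_eval N (pow_mod_coeff_mpoly N (Suc m) k) x =
     (if k = 0 then 0 else mpoly_eval N (pow_mod_coeff_mpoly N m (k - 1)) x)
     - mpoly_eval N (pow_mod_coeff_mpoly N m (N - 1)) x * coeff (\<Prod>l<N. [:- x l, 1:]) k"
  by (simp add: mpoly_eval_diff mpoly_eval_mult mpoly_eval_const coeff_prod_linear[of N N]
      is_mpoly_pow_mod_coeff_mpoly is_mpoly_lin_prod_coeff_mpoly is_mpoly_const is_mpoly_mult)

definition pow_mod_poly :: "nat \<Rightarrow> nat \<Rightarrow> (nat \<Rightarrow> 'a::comm_ring_1) \<Rightarrow> 'a poly" where
  "pow_mod_poly N m x = (\<Sum>k<N. monom (mpoly_eval N (pow_mod_coeff_mpoly N m k) x) k)"

lemma coeff_pow_mod_poly: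
  "coeff (pow_mod_poly N m x) k = (if k < N then mpoly_eval N (pow_mod_coeff_mpoly N m k) x else 0)"
  by (simp add: pow_mod_poly_def coeff_sum)

lemma degree_pow_mod_poly: "degree (pow_mod_poly N m x) \<le> N - 1"
  unfolding pow_mod_poly_def
  by (rule degree_sum_le) (auto intro: order.trans[OF degree_monom_le])

lemma pow_mod_poly_Suc:
  assumes "1 \<le> N"
  shows "pow_mod_poly N (Suc m) x = pCons 0 (pow_mod_poly N m x)
     - smult (coeff (pow_mod_poly N m x) (N - 1)) (\<Prod>l<N. [:- x l, 1:])"
proof (rule poly_eqI)
  fix k
  have top: "coeff (\<Prod>l<N. [:- x l, 1:]) N = 1" "\<And>k. N < k \<Longrightarrow> coeff (\<Prod>l<N. [:- x l, 1:]) k = 0"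
    using coeff_prod_linear_top[where n = N and x = x] by auto
  consider "k = 0" | j where "k = Suc j" "Suc j < N" | "k = N" | "N < k"
    using assms by (cases k) force+
  then show "coeff (pow_mod_poly N (Suc m) x) k = coeff (pCons 0 (pow_mod_poly N m x)
     - smult (coeff (pow_mod_poly N m x) (N - 1)) (\<Prod>l<N. [:- x l, 1:])) k"
    using assms top
    by cases (auto simp: coeff_pow_mod_poly mpoly_eval_pow_mod_coeff_mpoly_Suc coeff_pCons
        split: nat.split simp del: pow_mod_coeff_mpoly.simps)
qed

lemma prod_linear_dvd_monom_minus_pow_mod_poly:
  assumes "1 \<le> N"
  shows "(\<Prod>l<N. [:- x l, 1:]) dvd monom 1 m - pow_mod_poly N m x"
proof (induction m)
  case 0
  have "monom 1 0 - pow_mod_poly N 0 x = 0"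
    using assms by (intro poly_eqI) (auto simp: coeff_pow_mod_poly mpoly_eval_const coeff_monom)
  then show ?case by simp
next
  case (Suc m)
  have "monom 1 (Suc m) - pow_mod_poly N (Suc m) x =
      [:0, 1:] * (monom 1 m - pow_mod_poly N m x)
      + smult (coeff (pow_mod_poly N m x) (N - 1)) (\<Prod>l<N. [:- x l, 1:])"
    unfolding pow_mod_poly_Suc[OF assms] by (simp add: monom_Suc algebra_simps mult_pCons_left)
  then show ?case
    by (simp only:) (intro dvd_add dvd_mult[OF Suc.IH] dvd_smult dvd_refl)
qed

lemma pow_eq_pow_mod_sum:
  assumes "1 \<le> N" and "i < N"
  shows "x i ^ m = (\<Sum>k<N. mpoly_eval N (pow_mod_coeff_mpoly N m k) x * x i ^ k)"
proof -
  obtain g where g: "monom 1 m - pow_mod_poly N m x = (\<Prod>l<N. [:- x l, 1:]) * g"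
    using prod_linear_dvd_monom_minus_pow_mod_poly[OF assms(1)] by (auto simp: dvd_def)
  have "poly (\<Prod>l<N. [:- x l, 1:]) (x i) = 0"
    using assms(2) by (simp add: poly_prod prod.remove[of "{..<N}" i])
  then have "poly (monom 1 m - pow_mod_poly N m x) (x i) = 0" unfolding g by simp
  then show ?thesis by (simp add: pow_mod_poly_def poly_sum poly_monom)
qed

lemma pow_mod_poly_eqI:
  fixes x :: "nat \<Rightarrow> 'a::idom"
  assumes "1 \<le> N" and "degree s < N" and "(\<Prod>l<N. [:- x l, 1:]) dvd monom 1 m - s"
  shows "pow_mod_poly N m x = s"
proof (rule ccontr)
  let ?e = "\<Prod>l<N. [:- x l, 1:]"
  assume "pow_mod_poly N m x \<noteq> s"
  then have nonzero: "s - pow_mod_poly N m x \<noteq> 0" by simp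
  have "?e dvd (monom 1 m - pow_mod_poly N m x) - (monom 1 m - s)"
    using prod_linear_dvd_monom_minus_pow_mod_poly[OF assms(1)] assms(3) by (rule dvd_diff)
  then have "degree ?e \<le> degree (s - pow_mod_poly N m x)"
    using nonzero by (intro dvd_imp_degree_le) simp_all
  also have "\<dots> \<le> max (degree s) (degree (pow_mod_poly N m x))"
    by (rule degree_diff_le_max)
  also have "\<dots> < N"
    using assms(1,2) degree_pow_mod_poly[of N m x] by simp
  finally show False by (simp add: degree_prod_eq_sum_degree)
qed

section \<open>Hook Schur polynomials\<close>

lemma schur_mpoly_eqI:
  assumes P: "is_mpoly N P"
    and alternant: "\<And>x :: nat \<Rightarrow> rat. inj_on x {..<N} \<Longrightarrow>
      mpoly_eval N P x * vandermonde N x = alternant N lam x"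
  shows "schur_mpoly N lam = P"
  unfolding schur_mpoly_def
proof (rule the_equality)
  show "is_mpoly N P \<and> (\<forall>x :: nat \<Rightarrow> rat. inj_on x {..<N} \<longrightarrow>
      mpoly_eval N P x * alternant N (\<lambda>_. 0) x = alternant N lam x)"
    using P alternant by (simp add: alternant_zero_eq_vandermonde)
next
  fix Q
  assume Q: "is_mpoly N Q \<and> (\<forall>x :: nat \<Rightarrow> rat. inj_on x {..<N} \<longrightarrow>
      mpoly_eval N Q x * alternant N (\<lambda>_. 0) x = alternant N lam x)"
  have "mpoly_diff Q P m = 0" for m
  proof (rule mpoly_eq_0_if_eval_rat_eq_0[of N "mpoly_diff Q P"])
    show "is_mpoly N (mpoly_diff Q P)" using P Q by (simp add: is_mpoly_diff)
    fix x :: "nat \<Rightarrow> rat" assume x: "inj_on x {..<N}"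
    then have "mpoly_eval N Q x * vandermonde N x = mpoly_eval N P x * vandermonde N x"
      using Q alternant by (simp add: alternant_zero_eq_vandermonde)
    then show "mpoly_eval N (mpoly_diff Q P) x = 0"
      using vandermonde_nonzero[OF x] P Q by (simp add: mpoly_eval_diff)
  qed
  then show "Q = P" by (auto simp: mpoly_diff_def)
qed

lemma alternant_hook:
  fixes x :: "nat \<Rightarrow> 'a::comm_ring_1"
  assumes "1 \<le> N" and "N \<le> M" and "j < N"
  shows "alternant N (hook M N j) x =
    (-1) ^ (N - 1 - j) * mpoly_eval N (pow_mod_coeff_mpoly N M j) x * vandermonde N x"
proof -
  define r where "r = N - 1 - j"
  have r: "r < N" using assms(3) unfolding r_def by simp
  define q where "q s = mpoly_eval N (pow_mod_coeff_mpoly N M s) x" for s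
  define K where "K = mat N N (\<lambda>(i, k). if k = r then x i ^ M else x i ^ (N - 1 - k))"
  define T where "T = diag_minus_rank_one N (\<lambda>l. if l = r then 0 else 1) (\<lambda>l. - q (N - 1 - l))
    (\<lambda>k. if k = r then 1 else 0)"
  have K: "K \<in> carrier_mat N N" by (simp add: K_def)
  \<comment> \<open>the exponents of the hook alternant are M, N - 1, ..., j + 1, j - 1, ..., 0\<close>
  have "mat N N (\<lambda>(i, k). x i ^ (hook M N j k + (N - 1 - k))) = swap_col_to_front K r"
    unfolding swap_col_to_front_result[OF K r]
    by (rule eq_matI) (use assms in \<open>auto simp: K_def hook_def r_def\<close>)
  then have "alternant N (hook M N j) x = (-1) ^ r * det K"
    unfolding alternant_def using swap_col_to_front_det[OF K r] by simp
  \<comment> \<open>column r of T holds the coefficients of z^M mod \<Prod>l<N. (z - x_l)\<close>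
  also have "K = vandermonde_mat N x * T"
  proof (rule eq_matI)
    fix i k assume "i < dim_row (vandermonde_mat N x * T)" "k < dim_col (vandermonde_mat N x * T)"
    then have i: "i < N" and k: "k < N" by (auto simp: vandermonde_mat_def T_def diag_minus_rank_one_def)
    have entry: "(vandermonde_mat N x * T) $$ (i, k) =
        (\<Sum>l<N. x i ^ (N - 1 - l) * ((if l = k then if l = r then 0 else 1 else 0)
           + q (N - 1 - l) * (if k = r then 1 else 0)))"
      unfolding vandermonde_mat_def T_def diag_minus_rank_one_def index_mat_mult_mat[OF i k] by simp
    show "K $$ (i, k) = (vandermonde_mat N x * T) $$ (i, k)"
    proof (cases "k = r")
      case True
      have "(\<Sum>l<N. x i ^ (N - Suc l) * q (N - Suc l)) = (\<Sum>s<N. x i ^ s * q s)"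
        by (rule sum.nat_diff_reindex)
      also have "\<dots> = x i ^ M"
        using pow_eq_pow_mod_sum[OF assms(1) i, of x M] by (simp add: q_def mult.commute)
      finally show ?thesis
        using True i k unfolding entry by (simp add: K_def cong: if_cong)
    next
      case False
      then show ?thesis
        using i k unfolding entry
        by (simp add: K_def if_distrib[of "\<lambda>y. _ * y"] sum.delta' cong: if_cong)
    qed
  qed (auto simp: K_def vandermonde_mat_def T_def diag_minus_rank_one_def)
  also have "det (vandermonde_mat N x * T) = vandermonde N x * q j"
  proof -
    have "det T = - (- q (N - 1 - r) * (\<Prod>l\<in>{..<N} - {r}. if l = r then 0 else 1))"
      unfolding T_def det_diag_minus_rank_one
      using r by (simp add: prod_zero_iff sum_negf if_distrib[of "\<lambda>y. _ * y * _"] sum.delta' cong: if_cong)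
    also have "\<dots> = q j" using assms(3) by (simp add: r_def)
    moreover have "det (vandermonde_mat N x * T) = det (vandermonde_mat N x) * det T"
      by (rule det_mult) (auto simp: vandermonde_mat_def T_def diag_minus_rank_one_def)
    ultimately show ?thesis by (simp add: det_vandermonde_mat)
  qed
  finally show ?thesis by (simp add: r_def q_def mult_ac)
qed

lemma schur_hook:
  assumes "1 \<le> N" and "N \<le> M" and "j < N"
  shows "schur N (hook M N j) x = (-1) ^ (N - 1 - j) * mpoly_eval N (pow_mod_coeff_mpoly N M j) x"
proof -
  have "schur_mpoly N (hook M N j) =
      mpoly_mult (mpoly_const ((-1) ^ (N - 1 - j))) (pow_mod_coeff_mpoly N M j)"
    using alternant_hook[OF assms, symmetric]
    by (intro schur_mpoly_eqI) (auto simp: mpoly_eval_mult mpoly_eval_const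
        is_mpoly_mult is_mpoly_const is_mpoly_pow_mod_coeff_mpoly)
  then show ?thesis
    by (simp add: schur_def mpoly_eval_mult mpoly_eval_const is_mpoly_const is_mpoly_pow_mod_coeff_mpoly)
qed

lemma pow_mod_poly_ones:
  assumes "1 \<le> N" and "N \<le> M"
  shows "pow_mod_poly N M (\<lambda>_. 1 :: int) = (\<Sum>i<N. smult (int (M choose i)) ([:-1, 1:] ^ i))"
proof (rule pow_mod_poly_eqI[OF assms(1)])
  let ?L = "[:-1, 1 :: int:]"
  have "degree (\<Sum>i<N. smult (int (M choose i)) (?L ^ i)) \<le> N - 1"
    by (rule degree_sum_le) (auto intro: order.trans[OF degree_smult_le] simp: degree_linear_power)
  then show "degree (\<Sum>i<N. smult (int (M choose i)) (?L ^ i)) < N"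
    using assms(1) by linarith
  have "monom 1 M = (?L + 1) ^ M" by (simp add: monom_altdef one_pCons)
  also have "\<dots> = (\<Sum>i\<le>M. smult (int (M choose i)) (?L ^ i))"
    by (simp add: binomial_ring of_nat_poly)
  also have "{..M} = {..<N} \<union> {N..M}" using assms(2) by auto
  finally have "monom 1 M - (\<Sum>i<N. smult (int (M choose i)) (?L ^ i)) =
      (\<Sum>i\<in>{N..M}. smult (int (M choose i)) (?L ^ i))"
    by (subst (asm) sum.union_disjoint) auto
  moreover have "?L ^ N dvd smult (int (M choose i)) (?L ^ i)" if "i \<in> {N..M}" for i
    using that by (intro dvd_smult le_imp_power_dvd) simp
  ultimately show "(\<Prod>l<N. [:- 1, 1:]) dvd monom 1 M - (\<Sum>i<N. smult (int (M choose i)) (?L ^ i))"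
    by (simp add: dvd_sum del: atLeastAtMost_iff)
qed

lemma sum_alternating_Suc_choose:
  "(\<Sum>t\<le>n. (-1) ^ t * int (Suc a choose t)) = (-1) ^ n * int (a choose n)"
  by (induction n) (simp_all add: algebra_simps)

lemma sum_choose_mult_alternating:
  assumes "j < N" and "N \<le> M"
  shows "(\<Sum>i\<in>{j..<N}. int (M choose i) * int (i choose j) * (-1) ^ (i - j))
    = (-1) ^ (N - 1 - j) * int ((M choose j) * ((M - j - 1) choose (N - j - 1)))"
proof -
  have "(\<Sum>i\<in>{j..<N}. int (M choose i) * int (i choose j) * (-1) ^ (i - j))
      = (\<Sum>t\<in>{0..<N - j}. int (M choose (t + j)) * int ((t + j) choose j) * (-1) ^ t)"
    using sum.shift_bounds_nat_ivl[of "\<lambda>i. int (M choose i) * int (i choose j) * (-1) ^ (i - j)" 0 j "N - j"]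
      assms(1) by simp
  also have "\<dots> = (\<Sum>t\<le>N - 1 - j. int (M choose j) * ((-1) ^ t * int (Suc (M - j - 1) choose t)))"
  proof (rule sum.cong)
    show "{0..<N - j} = {..N - 1 - j}" using assms by auto
    fix t assume "t \<in> {..N - 1 - j}"
    then have "(M choose (t + j)) * ((t + j) choose j) = (M choose j) * ((M - j) choose t)"
      using choose_mult[of j "t + j" M] assms by simp
    moreover have "Suc (M - j - 1) = M - j" using assms by simp
    ultimately show "int (M choose (t + j)) * int ((t + j) choose j) * (-1) ^ t =
        int (M choose j) * ((-1) ^ t * int (Suc (M - j - 1) choose t))"
      by (simp flip: of_nat_mult)
  qed
  also have "\<dots> = (-1) ^ (N - 1 - j) * int ((M choose j) * ((M - j - 1) choose (N - j - 1)))"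
    by (simp add: sum_distrib_left[symmetric] sum_alternating_Suc_choose)
  finally show ?thesis .
qed

lemma schur_hook_ones:
  assumes "1 \<le> N" and "N \<le> M" and "j < N"
  shows "schur N (hook M N j) (\<lambda>_. 1 :: int) = int ((M choose j) * ((M - j - 1) choose (N - j - 1)))"
proof -
  have "mpoly_eval N (pow_mod_coeff_mpoly N M j) (\<lambda>_. 1 :: int) = coeff (pow_mod_poly N M (\<lambda>_. 1)) j"
    using assms(3) by (simp add: coeff_pow_mod_poly)
  also have "\<dots> = (\<Sum>i\<in>{j..<N}. int (M choose i) * int (i choose j) * (-1) ^ (i - j))"
    unfolding pow_mod_poly_ones[OF assms(1,2)] coeff_sum coeff_smult
    by (auto simp: sum.If_cases lessThan_atLeast0 coeff_linear_poly_power coeff_eq_0 degree_linear_power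
        intro!: sum.mono_neutral_cong_right)
  also have "\<dots> = (-1) ^ (N - 1 - j) * int ((M choose j) * ((M - j - 1) choose (N - j - 1)))"
    by (rule sum_choose_mult_alternating[OF assms(3,2)])
  finally show ?thesis
    unfolding schur_hook[OF assms] by (simp flip: power_add)
qed

section \<open>The determinant of p_t[u v^T]\<close>

interpretation const_poly_hom: comm_ring_hom "\<lambda>a :: 'a :: comm_ring_1. [:a:]"
  by unfold_locales (simp_all add: one_pCons)

lemma pt_mat_factorization:
  fixes c u v :: "nat \<Rightarrow> 'a::comm_ring_1" and M N :: nat
  assumes "1 \<le> N"
  defines "qu \<equiv> \<lambda>s. mpoly_eval N (pow_mod_coeff_mpoly N M s) u"
    and "qv \<equiv> \<lambda>s. mpoly_eval N (pow_mod_coeff_mpoly N M s) v"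
  shows "mat N N (\<lambda>(i, l). pt M N c (u i * v l)) =
    map_mat (\<lambda>a. [:a:]) (vandermonde_mat N u)
    * diag_minus_rank_one N (\<lambda>k. smult (c (N - 1 - k)) [:0, 1:])
        (\<lambda>k. [:qu (N - 1 - k):]) (\<lambda>k. [:qv (N - 1 - k):])
    * map_mat (\<lambda>a. [:a:]) (transpose_mat (vandermonde_mat N v))"
proof -
  have pow_u: "(\<Sum>k<N. u i ^ (N - 1 - k) * qu (N - 1 - k)) = u i ^ M" if "i < N" for i
    using pow_eq_pow_mod_sum[OF assms(1) that, of u M]
      sum.nat_diff_reindex[where g = "\<lambda>s. u i ^ s * qu s" and n = N]
    by (simp add: qu_def mult.commute)
  have pow_v: "(\<Sum>k<N. qv (N - 1 - k) * v l ^ (N - 1 - k)) = v l ^ M" if "l < N" for l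
    using pow_eq_pow_mod_sum[OF assms(1) that, of v M]
      sum.nat_diff_reindex[where g = "\<lambda>s. qv s * v l ^ s" and n = N]
    by (simp add: qv_def mult.commute)
  have linear_part: "(\<Sum>k<N. u i ^ (N - 1 - k) * c (N - 1 - k) * v l ^ (N - 1 - k))
      = (\<Sum>s<N. c s * (u i * v l) ^ s)" for i l
    using sum.nat_diff_reindex[where g = "\<lambda>s. c s * (u i * v l) ^ s" and n = N]
    by (simp add: power_mult_distrib mult_ac)
  have sum_linear: "(\<Sum>k\<in>A. [:0, f k:]) = [:0, \<Sum>k\<in>A. f k:]" for A and f :: "nat \<Rightarrow> 'a"
    by (induction A rule: infinite_finite_induct) simp_all
  have entry: "pt M N c (u i * v l) =
      (\<Sum>k<N. [:u i ^ (N - 1 - k):] * smult (c (N - 1 - k)) [:0, 1:] * [:v l ^ (N - 1 - k):])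
      - (\<Sum>k<N. [:u i ^ (N - 1 - k):] * [:qu (N - 1 - k):])
        * (\<Sum>k<N. [:qv (N - 1 - k):] * [:v l ^ (N - 1 - k):])"
    if "i < N" "l < N" for i l
  proof -
    have "(\<Sum>k<N. [:u i ^ (N - 1 - k):] * smult (c (N - 1 - k)) [:0, 1:] * [:v l ^ (N - 1 - k):])
        = [:0, \<Sum>s<N. c s * (u i * v l) ^ s:]"
      unfolding linear_part[symmetric] by (simp add: sum_linear mult_ac)
    moreover have "(\<Sum>k<N. [:u i ^ (N - 1 - k):] * [:qu (N - 1 - k):]) = [:u i ^ M:]"
      unfolding pow_u[OF that(1), symmetric] by (simp add: const_poly_hom.hom_sum mult.commute)
    moreover have "(\<Sum>k<N. [:qv (N - 1 - k):] * [:v l ^ (N - 1 - k):]) = [:v l ^ M:]"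
      unfolding pow_v[OF that(2), symmetric] by (simp add: const_poly_hom.hom_sum mult.commute)
    ultimately show ?thesis
      by (simp add: pt_def power_mult_distrib)
  qed
  have "map_mat (\<lambda>a. [:a:]) (vandermonde_mat N u) = mat N N (\<lambda>(i, k). [:u i ^ (N - 1 - k):])"
    and "map_mat (\<lambda>a. [:a:]) (transpose_mat (vandermonde_mat N v)) =
      mat N N (\<lambda>(k, l). [:v l ^ (N - 1 - k):])"
    by (auto simp: vandermonde_mat_def)
  then show ?thesis
    by (simp only: mat_mult_diag_minus_rank_one_mult) (auto intro!: eq_matI simp: entry)
qed

lemma det_smult_X_diag_minus_rank_one:
  fixes a b c :: "nat \<Rightarrow> 'a::field"
  assumes "1 \<le> n" and "\<forall>k<n. c k \<noteq> 0"
  shows "det (diag_minus_rank_one n (\<lambda>k. smult (c k) [:0, 1:]) (\<lambda>k. [:a k:]) (\<lambda>k. [:b k:])) =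
    [:0, 1:] ^ (n - 1) * [:\<Prod>k<n. c k:] * ([:0, 1:] - [:\<Sum>k<n. a k * b k / c k:])"
proof -
  let ?X = "[:0, 1 :: 'a:]" and ?P = "\<Prod>k<n. c k"
  have prod_remove: "(\<Prod>l\<in>{..<n} - {j}. c l) = ?P / c j" if "j < n" for j
  proof -
    have "?P = c j * (\<Prod>l\<in>{..<n} - {j}. c l)"
      using that by (simp add: prod.remove)
    then show ?thesis using assms(2) that by (simp add: field_simps)
  qed
  have "(\<Sum>j<n. [:a j:] * [:b j:] * smult (\<Prod>l\<in>{..<n} - {j}. c l) (\<Prod>l\<in>{..<n} - {j}. ?X))
      = (\<Sum>j<n. smult (?P * (a j * b j / c j)) (?X ^ (n - 1)))"
    by (intro sum.cong refl) (simp add: prod_remove mult_ac)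
  moreover have "?X ^ n = ?X ^ (n - 1) * ?X"
    using assms(1) by (simp add: power_eq_if)
  ultimately have "det (diag_minus_rank_one n (\<lambda>k. smult (c k) ?X) (\<lambda>k. [:a k:]) (\<lambda>k. [:b k:])) =
      smult ?P (?X ^ (n - 1) * ?X) - (\<Sum>j<n. smult (?P * (a j * b j / c j)) (?X ^ (n - 1)))"
    unfolding det_diag_minus_rank_one prod_smult by simp
  also have "(\<Sum>j<n. smult (?P * (a j * b j / c j)) (?X ^ (n - 1)))
      = smult (?P * (\<Sum>k<n. a k * b k / c k)) (?X ^ (n - 1))"
    by (simp only: smult_sum sum_distrib_left)
  also have "smult ?P (?X ^ (n - 1) * ?X) - \<dots> = ?X ^ (n - 1) * [:?P:] * (?X - [:\<Sum>k<n. a k * b k / c k:])"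
    by (simp add: algebra_simps smult_diff_right)
  finally show ?thesis .
qed

lemma schur_hook_mult:
  assumes "1 \<le> N" and "N \<le> M" and "j < N"
  shows "schur N (hook M N j) u * schur N (hook M N j) v =
    mpoly_eval N (pow_mod_coeff_mpoly N M j) u * mpoly_eval N (pow_mod_coeff_mpoly N M j) v"
  unfolding schur_hook[OF assms] by (simp add: mult_ac flip: power_add)

lemma det_pt_mat:
  fixes c u v :: "nat \<Rightarrow> 'a::field" and M N :: nat
  assumes "1 \<le> N" and "N \<le> M" and "\<forall>j<N. c j \<noteq> 0"
  shows "det (mat N N (\<lambda>(i, k). pt M N c (u i * v k))) =
    [:0, 1:] ^ (N - 1) * [:vandermonde N u * vandermonde N v * (\<Prod>j<N. c j):] *
    ([:0, 1:] - [:\<Sum>j<N. schur N (hook M N j) u * schur N (hook M N j) v / c j:])"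
proof -
  define qu where "qu s = mpoly_eval N (pow_mod_coeff_mpoly N M s) u" for s
  define qv where "qv s = mpoly_eval N (pow_mod_coeff_mpoly N M s) v" for s
  let ?G = "diag_minus_rank_one N (\<lambda>k. smult (c (N - 1 - k)) [:0, 1:])
    (\<lambda>k. [:qu (N - 1 - k):]) (\<lambda>k. [:qv (N - 1 - k):])"
  let ?U = "map_mat (\<lambda>a. [:a:]) (vandermonde_mat N u)"
  let ?W = "map_mat (\<lambda>a. [:a:]) (transpose_mat (vandermonde_mat N v))"
  have carrier: "?U \<in> carrier_mat N N" "?G \<in> carrier_mat N N" "?W \<in> carrier_mat N N"
    by (auto simp: vandermonde_mat_def diag_minus_rank_one_def)
  have "det (mat N N (\<lambda>(i, k). pt M N c (u i * v k))) = det ?U * det ?G * det ?W"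
    unfolding pt_mat_factorization[OF assms(1)] qu_def qv_def
    using carrier by (simp add: det_mult[of _ N] qu_def qv_def)
  also have "det ?U = [:vandermonde N u:]"
    by (simp add: det_vandermonde_mat)
  also have "det ?W = [:vandermonde N v:]"
    by (simp add: det_transpose[of _ N] vandermonde_mat_def det_vandermonde_mat[symmetric])
  also have "det ?G = [:0, 1:] ^ (N - 1) * [:\<Prod>j<N. c j:] * ([:0, 1:] - [:\<Sum>j<N. qu j * qv j / c j:])"
    using det_smult_X_diag_minus_rank_one[of N "\<lambda>k. c (N - 1 - k)" "\<lambda>k. qu (N - 1 - k)" "\<lambda>k. qv (N - 1 - k)"]
      assms(1,3) prod.nat_diff_reindex[of c N] sum.nat_diff_reindex[of "\<lambda>j. qu j * qv j / c j" N]
    by simp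
  also have "(\<Sum>j<N. qu j * qv j / c j) = (\<Sum>j<N. schur N (hook M N j) u * schur N (hook M N j) v / c j)"
    using assms(1,2) by (simp add: schur_hook_mult qu_def qv_def)
  finally show ?thesis by (simp only: const_poly_hom.hom_mult ac_simps)
qed

theorem theorem2p1:
  fixes c u v :: "nat \<Rightarrow> 'a::field" and M N :: nat
  assumes "1 \<le> N" and "N \<le> M" and "\<forall>j<N. c j \<noteq> 0"
  shows "det (mat N N (\<lambda>(i,k). pt M N c (u i * v k))) =
           [:0, 1:] ^ (N - 1) *
           [: vandermonde N u * vandermonde N v * (\<Prod>j<N. c j) :] *
           ([:0, 1:] - [: \<Sum>j<N. schur N (hook M N j) u * schur N (hook M N j) v / c j :]) \<and>
         (\<forall>j<N. schur N (hook M N j) (\<lambda>_. 1 :: int)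
                = int ((M choose j) * ((M - j - 1) choose (N - j - 1))))"
  using det_pt_mat[OF assms] schur_hook_ones[OF assms(1,2)] by blast

end
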